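(* Fix any $d,r\in\mathbb{N}$. For every $m\in\mathbb{N}$ there exists $m'=m'(d,r,m)$ such that every graph $G$ with $(r,m')$-rank more than $d$ contains $T_{d,m}$ as an $r$-shallow topological minor.
   Context: $T_{d,m}$ is the rooted tree of depth $d$ (all leaf-to-root paths have $d$ edges) in which every non-leaf vertex has exactly $m$ children. $H$ is an $r$-shallow topological minor of $G$ if $G$ has a subgraph isomorphic to a graph obtained from $H$ by replacing each edge by a path with at most $r$ internal vertices (paths internally disjoint). $N_r^G(v)$ is the closed $r$-neighborhood of $v$; $G-S$ is the subgraph induced on $V(G)\setminus S$. The $(r,m)$-rank of vertices of $G$ (values in $\mathbb{N}\cup\{\infty\}$, with $\infty$ larger than every integer) is defined by: initially every vertex has rank $\infty$; in rounds $i=1,2,\dots$, every vertex $v$ currently of rank $\infty$ receives rank $i$ if there exists $S\subseteq V(G)\setminus\{v\}$ with $|S|\le m$ such that every vertex of $N_r^{G-S}(v)\setminus\{v\}$ received a finite rank in rounds $1,\dots,i-1$; the procedure stops when all ranks are finite or a round assigns no new rank. The $(r,m)$-rank of $G$ is the maximum $(r,m)$-rank of a vertex of $G$. *)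

theory Defs
  imports Main
begin

definition graph :: "'a set \<Rightarrow> ('a \<Rightarrow> 'a \<Rightarrow> bool) \<Rightarrow> bool" where
  "graph V E \<longleftrightarrow> finite V \<and> (\<forall>u v. E u v \<longrightarrow> u \<in> V \<and> v \<in> V)
     \<and> (\<forall>u v. E u v \<longrightarrow> E v u) \<and> (\<forall>v. \<not> E v v)"

fun nbhd :: "'a set \<Rightarrow> ('a \<Rightarrow> 'a \<Rightarrow> bool) \<Rightarrow> nat \<Rightarrow> 'a \<Rightarrow> 'a set" where
  "nbhd W E 0 v = (if v \<in> W then {v} else {})"
| "nbhd W E (Suc k) v = nbhd W E k v \<union> {u \<in> W. \<exists>w \<in> nbhd W E k v. E w u}"

text \<open>ranked V E r m i = set of vertices of (r,m)-rank at most i (finite rank assigned in rounds 1..i).\<close>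
fun ranked :: "'a set \<Rightarrow> ('a \<Rightarrow> 'a \<Rightarrow> bool) \<Rightarrow> nat \<Rightarrow> nat \<Rightarrow> nat \<Rightarrow> 'a set" where
  "ranked V E r m 0 = {}"
| "ranked V E r m (Suc i) = ranked V E r m i \<union>
     {v \<in> V. \<exists>S. S \<subseteq> V - {v} \<and> card S \<le> m \<and>
          nbhd (V - S) E r v - {v} \<subseteq> ranked V E r m i}"

text \<open>The (r,m)-rank of G is more than d: some vertex has rank > d (possibly infinite).\<close>
definition rank_gt :: "'a set \<Rightarrow> ('a \<Rightarrow> 'a \<Rightarrow> bool) \<Rightarrow> nat \<Rightarrow> nat \<Rightarrow> nat \<Rightarrow> bool" where
  "rank_gt V E r m d \<longleftrightarrow> (\<exists>v \<in> V. v \<notin> ranked V E r m d)"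

definition is_path :: "'a set \<Rightarrow> ('a \<Rightarrow> 'a \<Rightarrow> bool) \<Rightarrow> 'a list \<Rightarrow> bool" where
  "is_path V E p \<longleftrightarrow> p \<noteq> [] \<and> distinct p \<and> set p \<subseteq> V \<and>
     (\<forall>i. Suc i < length p \<longrightarrow> E (p ! i) (p ! Suc i))"

definition interior :: "'a list \<Rightarrow> 'a set" where
  "interior p = set (butlast (tl p))"

definition shallow_top_minor ::
  "nat \<Rightarrow> 'b set \<Rightarrow> ('b \<Rightarrow> 'b \<Rightarrow> bool) \<Rightarrow> 'a set \<Rightarrow> ('a \<Rightarrow> 'a \<Rightarrow> bool) \<Rightarrow> bool" where
  "shallow_top_minor r VH EH V E \<longleftrightarrow>
     (\<exists>(f :: 'b \<Rightarrow> 'a) (P :: 'b set \<Rightarrow> 'a list).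
        inj_on f VH \<and> f ` VH \<subseteq> V \<and>
        (\<forall>a b. EH a b \<longrightarrow>
            is_path V E (P {a, b}) \<and>
            {hd (P {a, b}), last (P {a, b})} = {f a, f b} \<and>
            length (P {a, b}) \<le> r + 2 \<and>
            interior (P {a, b}) \<inter> f ` VH = {}) \<and>
        (\<forall>a b a' b'. EH a b \<longrightarrow> EH a' b' \<longrightarrow> {a, b} \<noteq> {a', b'} \<longrightarrow>
            interior (P {a, b}) \<inter> interior (P {a', b'}) = {}))"

text \<open>T_{d,m}: vertices are words over {0..<m} of length at most d (root = []);
  the children of w (length w < d) are w @ [i], i < m.\<close>
definition tree_V :: "nat \<Rightarrow> nat \<Rightarrow> nat list set" where
  "tree_V d m = {w. length w \<le> d \<and> set w \<subseteq> {..<m}}"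

definition tree_E :: "nat \<Rightarrow> nat \<Rightarrow> nat list \<Rightarrow> nat list \<Rightarrow> bool" where
  "tree_E d m u w \<longleftrightarrow> u \<in> tree_V d m \<and> w \<in> tree_V d m \<and>
     ((\<exists>i. w = u @ [i]) \<or> (\<exists>i. u = w @ [i]))"

end

theory Submission
  imports Defs
begin

(* Embed T_{d,m} greedily, parents before children, mapping each word w to a vertex of
   (r,m')-rank greater than d - |w|.  Every embedded word uses at most r + 1 vertices of G
   (its image and the interior of the path to its parent), so for m' = |T_{d,m}| (r + 1)
   the set S of used vertices other than the image x of the parent of a new word w has at
   most m' elements.  Since x has rank greater than d - |w| + 1, the r-neighbourhood of x
   in G - S contains a vertex u <> x of rank greater than d - |w|.  A path from x to u with
   at most r edges in G - S avoids every used vertex except x, so u and this path extend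
   the embedding. *)

lemma interior_subset: "interior p \<subseteq> set p"
  unfolding interior_def by (metis in_set_butlastD list.set_sel(2) subsetI tl_Nil)

lemma hd_notin_interior: "distinct p \<Longrightarrow> hd p \<notin> interior p"
  unfolding interior_def by (cases p) (auto dest: in_set_butlastD)

lemma last_notin_interior: "distinct p \<Longrightarrow> last p \<notin> interior p"
  unfolding interior_def
  by (cases p rule: rev_cases) (auto simp: butlast_tl, metis empty_iff list.set(1) list.set_sel(2) tl_Nil)

lemma card_interior_le: "card (interior p) \<le> length p - 2"
  unfolding interior_def by (metis card_length length_butlast length_tl diff_diff_left one_add_one)

lemma is_path_mono: "is_path W E p \<Longrightarrow> W \<subseteq> V \<Longrightarrow> is_path V E p"
  unfolding is_path_def by auto

lemma is_path_take: "is_path W E p \<Longrightarrow> 0 < n \<Longrightarrow> is_path W E (take n p)"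
  unfolding is_path_def by (auto dest: in_set_takeD)

lemma is_path_snoc:
  assumes "is_path W E p" "u \<in> W" "u \<notin> set p" "E (last p) u"
  shows "is_path W E (p @ [u])"
  using assms unfolding is_path_def
  by (auto simp: nth_append last_conv_nth less_Suc_eq) (metis diff_Suc_Suc minus_nat.diff_0)

lemma nbhd_imp_path:
  "u \<in> nbhd W E n x \<Longrightarrow> \<exists>p. is_path W E p \<and> hd p = x \<and> last p = u \<and> length p \<le> Suc n"
proof (induction n arbitrary: u)
  case 0
  then show ?case by (intro exI[of _ "[x]"]) (auto simp: is_path_def split: if_splits)
next
  case (Suc n)
  show ?case
  proof (cases "u \<in> nbhd W E n x")
    case True
    then show ?thesis using Suc.IH le_SucI by blast
  next
    case False
    then obtain w where "u \<in> W" "w \<in> nbhd W E n x" "E w u" using Suc.prems by auto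
    then obtain p where p: "is_path W E p" "hd p = x" "last p = w" "length p \<le> Suc n"
      using Suc.IH by blast
    then have "p \<noteq> []" by (auto simp: is_path_def)
    show ?thesis
    proof (cases "u \<in> set p")
      case True
      then obtain j where j: "j < length p" "p ! j = u" by (meson in_set_conv_nth)
      have "is_path W E (take (Suc j) p)" using p(1) is_path_take by blast
      moreover have "last (take (Suc j) p) = u" using j by (simp add: take_Suc_conv_app_nth)
      ultimately show ?thesis using p(2,4) \<open>p \<noteq> []\<close> by (intro exI[of _ "take (Suc j) p"]) auto
    next
      case False
      then show ?thesis using p \<open>p \<noteq> []\<close> \<open>u \<in> W\<close> \<open>E w u\<close>
        by (intro exI[of _ "p @ [u]"]) (auto intro: is_path_snoc)
    qed
  qed
qed

lemma unranked_escape_path: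
  assumes "x \<in> V" "x \<notin> ranked V E r m (Suc k)" "S \<subseteq> V - {x}" "card S \<le> m"
  obtains p where "is_path (V - S) E p" "hd p = x" "last p \<noteq> x"
    "last p \<notin> ranked V E r m k" "length p \<le> Suc r"
proof -
  have "\<not> nbhd (V - S) E r x - {x} \<subseteq> ranked V E r m k"
    using assms by auto
  then obtain u where u: "u \<in> nbhd (V - S) E r x" "u \<noteq> x" "u \<notin> ranked V E r m k"
    by blast
  moreover obtain p where "is_path (V - S) E p" "hd p = x" "last p = u" "length p \<le> Suc r"
    using nbhd_imp_path[OF u(1)] by blast
  ultimately show thesis using that by blast
qed

lemma finite_tree_V: "finite (tree_V d m)"
proof -
  have "tree_V d m = {w. set w \<subseteq> {..<m} \<and> length w \<le> d}"
    unfolding tree_V_def by auto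
  then show ?thesis using finite_lists_length_le[of "{..<m}" d] by simp
qed

lemma Nil_in_tree_V: "[] \<in> tree_V d m"
  unfolding tree_V_def by simp

lemma butlast_in_tree_V: "w \<in> tree_V d m \<Longrightarrow> butlast w \<in> tree_V d m"
  unfolding tree_V_def by (auto dest: in_set_butlastD)

lemma tree_E_parent_child:
  assumes "tree_E d m a b"
  obtains c where "c \<in> tree_V d m" "c \<noteq> []" "{a, b} = {butlast c, c}"
proof -
  obtain u i where "u @ [i] \<in> tree_V d m" "{a, b} = {u, u @ [i]}"
    using assms unfolding tree_E_def by (auto simp: insert_commute)
  then show thesis using that by simp
qed

definition subtree_embedding ::
  "'a set \<Rightarrow> ('a \<Rightarrow> 'a \<Rightarrow> bool) \<Rightarrow> nat \<Rightarrow> 'b list set \<Rightarrow> ('b list \<Rightarrow> 'a) \<Rightarrow> ('b list \<Rightarrow> 'a list) \<Rightarrow> bool"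
where
  "subtree_embedding V E r A f Q \<longleftrightarrow>
     inj_on f A \<and> f ` A \<subseteq> V \<and>
     (\<forall>w \<in> A - {[]}. butlast w \<in> A \<and> is_path V E (Q w) \<and>
        hd (Q w) = f (butlast w) \<and> last (Q w) = f w \<and> length (Q w) \<le> r + 2 \<and>
        interior (Q w) \<inter> f ` A = {}) \<and>
     (\<forall>w \<in> A - {[]}. \<forall>w' \<in> A - {[]}. w \<noteq> w' \<longrightarrow> interior (Q w) \<inter> interior (Q w') = {})"

definition used_vertices :: "'b list set \<Rightarrow> ('b list \<Rightarrow> 'a) \<Rightarrow> ('b list \<Rightarrow> 'a list) \<Rightarrow> 'a set" where
  "used_vertices A f Q = f ` A \<union> (\<Union>w \<in> A - {[]}. interior (Q w))"

lemma used_vertices_subset: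
  assumes "subtree_embedding V E r A f Q"
  shows "used_vertices A f Q \<subseteq> V"
proof -
  have "interior (Q w) \<subseteq> V" if "w \<in> A - {[]}" for w
    using assms that interior_subset[of "Q w"] unfolding subtree_embedding_def is_path_def by blast
  moreover have "f ` A \<subseteq> V"
    using assms unfolding subtree_embedding_def by blast
  ultimately show ?thesis
    unfolding used_vertices_def by blast
qed

lemma used_vertices_insert:
  assumes "w \<notin> A" "w \<noteq> []"
  shows "used_vertices (insert w A) (f(w := u)) (Q(w := p)) = insert u (used_vertices A f Q \<union> interior p)"
proof -
  have "(f(w := u)) ` insert w A = insert u (f ` A)"
    using assms(1) by (metis fun_upd_image insertI1 Diff_insert_absorb)
  moreover have "(\<Union>v \<in> A - {[]}. interior ((Q(w := p)) v)) = (\<Union>v \<in> A - {[]}. interior (Q v))"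
    using assms(1) by (intro SUP_cong) auto
  moreover have "insert w A - {[]} = insert w (A - {[]})"
    using assms(2) by blast
  ultimately show ?thesis
    unfolding used_vertices_def by auto
qed

lemma card_used_vertices_insert:
  assumes "finite A" "w \<notin> A" "w \<noteq> []" "length p \<le> r + 2"
    and "card (used_vertices A f Q) \<le> card A * (r + 1)"
  shows "card (used_vertices (insert w A) (f(w := u)) (Q(w := p))) \<le> card (insert w A) * (r + 1)"
proof -
  let ?U = "used_vertices A f Q"
  have "card (interior p) \<le> r" using card_interior_le[of p] assms(4) by linarith
  then have "card (?U \<union> interior p) \<le> card ?U + r"
    using card_Un_le[of ?U "interior p"] by linarith
  then have "card (used_vertices (insert w A) (f(w := u)) (Q(w := p))) \<le> Suc (card ?U + r)"
    unfolding used_vertices_insert[OF assms(2,3)] by (intro card_insert_le_m1) simp_all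
  also have "\<dots> \<le> card (insert w A) * (r + 1)" using assms(1,2,5) by simp
  finally show ?thesis .
qed

lemma inj_on_fun_upd_insert:
  assumes "inj_on f A" "y \<notin> f ` A" "x \<notin> A"
  shows "inj_on (f(x := y)) (insert x A)"
proof -
  have "A - {x} = A" "(f(x := y)) ` A = f ` A"
    using assms(3) by (auto intro: image_cong)
  then show ?thesis
    unfolding inj_on_insert using inj_on_fun_updI[OF assms(1,2)] assms(2) by simp
qed

lemma subtree_embedding_insert:
  assumes emb: "subtree_embedding V E r A f Q"
    and w: "w \<notin> A" "w \<noteq> []" "butlast w \<in> A"
    and p: "is_path V E p" "hd p = f (butlast w)" "length p \<le> r + 2"
    and fresh: "last p \<notin> used_vertices A f Q" "interior p \<inter> used_vertices A f Q = {}"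
  shows "subtree_embedding V E r (insert w A) (f(w := last p)) (Q(w := p))"
proof -
  let ?U = "used_vertices A f Q" and ?f = "f(w := last p)" and ?Q = "Q(w := p)"
  have inj: "inj_on f A" and f_V: "f ` A \<subseteq> V"
    and paths: "\<And>v. v \<in> A - {[]} \<Longrightarrow> butlast v \<in> A \<and> is_path V E (Q v) \<and>
      hd (Q v) = f (butlast v) \<and> last (Q v) = f v \<and> length (Q v) \<le> r + 2 \<and>
      interior (Q v) \<inter> f ` A = {}"
    and disjoint: "\<And>v v'. v \<in> A - {[]} \<Longrightarrow> v' \<in> A - {[]} \<Longrightarrow> v \<noteq> v' \<Longrightarrow>
      interior (Q v) \<inter> interior (Q v') = {}"
    using emb unfolding subtree_embedding_def by blast+
  have "distinct p" "set p \<subseteq> V" "last p \<in> set p" using p(1) by (auto simp: is_path_def)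
  have f_used: "f ` A \<subseteq> ?U" and interior_used: "\<And>v. v \<in> A - {[]} \<Longrightarrow> interior (Q v) \<subseteq> ?U"
    unfolding used_vertices_def by auto
  have image: "?f ` insert w A = insert (last p) (f ` A)"
    using w(1) by (metis fun_upd_image insertI1 Diff_insert_absorb)
  have "inj_on ?f (insert w A)"
    using inj_on_fun_upd_insert[OF inj _ w(1)] f_used fresh(1) by blast
  moreover have "?f ` insert w A \<subseteq> V"
    using f_V \<open>set p \<subseteq> V\<close> \<open>last p \<in> set p\<close> unfolding image by blast
  moreover have "\<forall>v \<in> insert w A - {[]}. butlast v \<in> insert w A \<and> is_path V E (?Q v) \<and>
      hd (?Q v) = ?f (butlast v) \<and> last (?Q v) = ?f v \<and> length (?Q v) \<le> r + 2 \<and>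
      interior (?Q v) \<inter> ?f ` insert w A = {}"
  proof
    fix v assume v: "v \<in> insert w A - {[]}"
    show "butlast v \<in> insert w A \<and> is_path V E (?Q v) \<and> hd (?Q v) = ?f (butlast v) \<and>
      last (?Q v) = ?f v \<and> length (?Q v) \<le> r + 2 \<and> interior (?Q v) \<inter> ?f ` insert w A = {}"
    proof (cases "v = w")
      case True
      have "butlast w \<noteq> w" using w(2) by (cases w rule: rev_cases) auto
      moreover have "interior p \<inter> insert (last p) (f ` A) = {}"
        using fresh(2) f_used last_notin_interior[OF \<open>distinct p\<close>] by blast
      ultimately show ?thesis
        using True w(3) p unfolding image by simp
    next
      case False
      then have vA: "v \<in> A - {[]}" using v by simp
      have "last p \<notin> interior (Q v)" using interior_used[OF vA] fresh(1) by blast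
      moreover have "butlast v \<noteq> w" using paths[OF vA] w(1) by blast
      ultimately show ?thesis
        using paths[OF vA] False unfolding image by simp
    qed
  qed
  moreover have "\<forall>v \<in> insert w A - {[]}. \<forall>v' \<in> insert w A - {[]}. v \<noteq> v' \<longrightarrow>
      interior (?Q v) \<inter> interior (?Q v') = {}"
  proof (intro ballI impI)
    fix v v' assume v: "v \<in> insert w A - {[]}" and v': "v' \<in> insert w A - {[]}" and "v \<noteq> v'"
    have "interior p \<inter> interior (Q u) = {}" if "u \<in> A - {[]}" for u
      using fresh(2) interior_used[OF that] by blast
    then show "interior (?Q v) \<inter> interior (?Q v') = {}"
      using disjoint v v' \<open>v \<noteq> v'\<close> by (cases "v = w"; cases "v' = w") (auto simp: Int_commute)
  qed
  ultimately show ?thesis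
    unfolding subtree_embedding_def by blast
qed

definition greedy_embedding ::
  "'a set \<Rightarrow> ('a \<Rightarrow> 'a \<Rightarrow> bool) \<Rightarrow> nat \<Rightarrow> nat \<Rightarrow> nat \<Rightarrow> 'b list set \<Rightarrow> ('b list \<Rightarrow> 'a) \<Rightarrow> ('b list \<Rightarrow> 'a list) \<Rightarrow> bool"
where
  "greedy_embedding V E r m' d A f Q \<longleftrightarrow>
     subtree_embedding V E r A f Q \<and> [] \<in> A \<and>
     (\<forall>w \<in> A. f w \<notin> ranked V E r m' (d - length w)) \<and>
     card (used_vertices A f Q) \<le> card A * (r + 1)"

lemma greedy_embedding_extend:
  assumes G: "graph V E" and emb: "greedy_embedding V E r m' d A f Q"
    and w: "w \<notin> A" "w \<noteq> []" "butlast w \<in> A" "length w \<le> d"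
    and budget: "card A * (r + 1) \<le> m'"
  shows "\<exists>f' Q'. greedy_embedding V E r m' d (insert w A) f' Q'"
proof -
  let ?U = "used_vertices A f Q" and ?x = "f (butlast w)" and ?k = "d - length w"
  have sub: "subtree_embedding V E r A f Q" and used: "card ?U \<le> card A * (r + 1)"
    and ranks: "\<forall>v \<in> A. f v \<notin> ranked V E r m' (d - length v)"
    using emb unfolding greedy_embedding_def by blast+
  have "finite V" using G unfolding graph_def by blast
  have U_V: "?U \<subseteq> V" using used_vertices_subset[OF sub] .
  have "?x \<in> V" using sub w(3) unfolding subtree_embedding_def by blast
  have "d - length (butlast w) = Suc ?k" using w(2,4) by (cases w rule: rev_cases) auto
  then have "?x \<notin> ranked V E r m' (Suc ?k)" using ranks w(3) by fastforce
  moreover have "?U - {?x} \<subseteq> V - {?x}" using U_V by blast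
  moreover have "card (?U - {?x}) \<le> m'" using card_Diff1_le[of ?U ?x] used budget by linarith
  ultimately obtain p where p: "is_path (V - (?U - {?x})) E p" "hd p = ?x" "last p \<noteq> ?x"
      "last p \<notin> ranked V E r m' ?k" "length p \<le> Suc r"
    by (rule unranked_escape_path[OF \<open>?x \<in> V\<close>])
  have "set p \<subseteq> V - (?U - {?x})" "distinct p" "p \<noteq> []"
    using p(1) unfolding is_path_def by simp_all
  then have "last p \<notin> ?U" "interior p \<inter> ?U = {}"
    using p(2,3) last_in_set interior_subset[of p] hd_notin_interior[of p] by auto
  moreover have "is_path V E p" by (rule is_path_mono[OF p(1)]) blast
  moreover have "length p \<le> r + 2" using p(5) by simp
  ultimately have sub': "subtree_embedding V E r (insert w A) (f(w := last p)) (Q(w := p))"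
    using subtree_embedding_insert[OF sub w(1-3)] p(2) by blast
  have "inj_on f A" "f ` A \<subseteq> V" using sub unfolding subtree_embedding_def by blast+
  then have "finite A" using finite_subset[OF _ \<open>finite V\<close>] finite_imageD by blast
  then have "card (used_vertices (insert w A) (f(w := last p)) (Q(w := p))) \<le> card (insert w A) * (r + 1)"
    by (rule card_used_vertices_insert[OF _ w(1,2) \<open>length p \<le> r + 2\<close> used])
  moreover have "\<forall>v \<in> insert w A. (f(w := last p)) v \<notin> ranked V E r m' (d - length v)"
    using ranks p(4) w(1) by auto
  ultimately show ?thesis
    using sub' emb unfolding greedy_embedding_def by blast
qed

lemma greedy_embedding_complete:
  assumes G: "graph V E" and "greedy_embedding V E r m' d A f Q" "A \<subseteq> tree_V d m"
    and budget: "card (tree_V d m) * (r + 1) \<le> m'"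
  shows "\<exists>f Q. subtree_embedding V E r (tree_V d m) f Q"
  using assms(2,3)
proof (induction "card (tree_V d m - A)" arbitrary: A f Q rule: less_induct)
  case less
  let ?T = "tree_V d m"
  show ?case
  proof (cases "A = ?T")
    case True
    then show ?thesis using less.prems unfolding greedy_embedding_def by blast
  next
    case False
    then obtain w where w: "w \<in> ?T - A" and shortest: "\<And>v. v \<in> ?T - A \<Longrightarrow> length w \<le> length v"
      using less.prems(2) ex_has_least_nat[of "\<lambda>v. v \<in> ?T - A"] by blast
    have "w \<noteq> []" using w less.prems(1) unfolding greedy_embedding_def by blast
    then have "length (butlast w) < length w" by simp
    then have "butlast w \<in> A"
      using shortest butlast_in_tree_V w by (meson DiffI DiffD1 leD)
    moreover have "length w \<le> d" using w unfolding tree_V_def by simp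
    moreover have "card A * (r + 1) \<le> m'"
      using card_mono[OF finite_tree_V less.prems(2)] budget by (meson le_trans mult_le_mono1)
    ultimately obtain f' Q' where "greedy_embedding V E r m' d (insert w A) f' Q'"
      using greedy_embedding_extend[OF G less.prems(1)] w \<open>w \<noteq> []\<close> by blast
    moreover have "card (?T - insert w A) < card (?T - A)"
      using w finite_tree_V by (metis Diff_insert card_Diff1_less finite_Diff)
    ultimately show ?thesis
      using less.hyps less.prems(2) w by blast
  qed
qed

lemma the_longest_of_child_edge:
  assumes "c \<noteq> []"
  shows "(THE c'. c' \<in> {butlast c, c} \<and> (\<forall>c'' \<in> {butlast c, c}. length c'' \<le> length c')) = c"
proof -
  have "length (butlast c) < length c" using assms by simp
  then show ?thesis by (intro the_equality) auto
qed

lemma subtree_embedding_tree_minor: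
  assumes emb: "subtree_embedding V E r (tree_V d m) f Q"
  shows "shallow_top_minor r (tree_V d m) (tree_E d m) V E"
proof -
  \<comment> \<open>A tree edge is indexed by its child, the longer of its two endpoints.\<close>
  define P where "P s = Q (THE c. c \<in> s \<and> (\<forall>c' \<in> s. length c' \<le> length c))" for s
  have P: "P {butlast c, c} = Q c" if "c \<noteq> []" for c
    unfolding P_def using the_longest_of_child_edge[OF that] by simp
  have paths: "is_path V E (P {a, b}) \<and> {hd (P {a, b}), last (P {a, b})} = {f a, f b} \<and>
      length (P {a, b}) \<le> r + 2 \<and> interior (P {a, b}) \<inter> f ` tree_V d m = {}"
    if edge: "tree_E d m a b" for a b
  proof -
    obtain c where c: "c \<in> tree_V d m" "c \<noteq> []" "{a, b} = {butlast c, c}"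
      using edge by (rule tree_E_parent_child)
    then have "{f a, f b} = {f (butlast c), f c}" by (metis doubleton_eq_iff)
    then show ?thesis
      using emb c P unfolding subtree_embedding_def by auto
  qed
  have disjoint: "interior (P {a, b}) \<inter> interior (P {a', b'}) = {}"
    if edges: "tree_E d m a b" "tree_E d m a' b'" "{a, b} \<noteq> {a', b'}" for a b a' b'
  proof -
    obtain c where c: "c \<in> tree_V d m" "c \<noteq> []" "{a, b} = {butlast c, c}"
      using edges(1) by (rule tree_E_parent_child)
    obtain c' where c': "c' \<in> tree_V d m" "c' \<noteq> []" "{a', b'} = {butlast c', c'}"
      using edges(2) by (rule tree_E_parent_child)
    have "c \<noteq> c'" using edges(3) c(3) c'(3) by blast
    then show ?thesis
      using emb c c' P unfolding subtree_embedding_def by auto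
  qed
  have "inj_on f (tree_V d m)" "f ` tree_V d m \<subseteq> V"
    using emb unfolding subtree_embedding_def by blast+
  then show ?thesis
    unfolding shallow_top_minor_def using paths disjoint by (intro exI[of _ f] exI[of _ P]) blast
qed

theorem lemma3p5:
  fixes d r :: nat
  shows "\<forall>m. \<exists>m'. \<forall>(V :: nat set) E. graph V E \<longrightarrow> rank_gt V E r m' d \<longrightarrow>
           shallow_top_minor r (tree_V d m) (tree_E d m) V E"
proof (intro allI exI impI)
  fix m and V :: "nat set" and E
  let ?m' = "card (tree_V d m) * (r + 1)"
  assume G: "graph V E" and "rank_gt V E r ?m' d"
  then obtain v where "v \<in> V" "v \<notin> ranked V E r ?m' d"
    unfolding rank_gt_def by blast
  then have "greedy_embedding V E r ?m' d {[]} (\<lambda>_. v) Q" for Q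
    unfolding greedy_embedding_def subtree_embedding_def used_vertices_def by simp
  then obtain f Q where "subtree_embedding V E r (tree_V d m) f Q"
    using greedy_embedding_complete[OF G _ _ order_refl] Nil_in_tree_V by blast
  then show "shallow_top_minor r (tree_V d m) (tree_E d m) V E"
    by (rule subtree_embedding_tree_minor)
qed

end
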